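(* Let $\alpha\ge1$. Let $c$ and $h$ be two decision trees on $n$ propositional variables with at most $m$ nodes in total for both trees, let $D$ be an $\alpha$-log-Lipschitz distribution on $\{0,1\}^n$, and let $\rho=\log n$. There is a fixed polynomial $\mathrm{poly}(\cdot,\cdot,\cdot)$ (depending only on $\alpha$) such that for all $0<\varepsilon<\frac12$, if $\Pr_{x\sim D}[h(x)\ne c(x)]<\mathrm{poly}(\frac1m,\frac1n,\varepsilon)$, then $\mathsf{R}_\rho(c,h)<\varepsilon$.
   Context: A decision tree over $n$ propositional variables is a finite binary tree whose internal nodes are labelled by elements of $\{1,\dots,n\}$ and whose leaves are labelled $0$ or $1$; an input $x\in\{0,1\}^n$ determines a root-to-leaf path by descending to the left child at a node labelled $i$ if $x_i=0$ and to the right child if $x_i=1$, and the tree's output is the label of the reached leaf. A distribution $D$ on $\{0,1\}^n$ is $\alpha$-log-Lipschitz if $|\log D(x)-\log D(x')|\le\log\alpha$ whenever $x,x'$ differ in exactly one bit. Robust risk: $\mathsf{R}_\rho(c,h)=\Pr_{x\sim D}[\exists z\in B_\rho(x):c(z)\ne h(z)]$, where $B_\rho(x)$ is the Hamming ball of radius $\rho$ around $x$. *)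

theory Defs
  imports Complex_Main
begin

text \<open>Decision trees: internal nodes labelled by a variable index (1..n),
  leaves labelled by a bit (False = 0, True = 1).\<close>
datatype dtree = Leaf bool | Node nat dtree dtree

fun nodes :: "dtree \<Rightarrow> nat" where
  "nodes (Leaf b) = 1"
| "nodes (Node i l r) = 1 + nodes l + nodes r"

fun labels :: "dtree \<Rightarrow> nat set" where
  "labels (Leaf b) = {}"
| "labels (Node i l r) = {i} \<union> labels l \<union> labels r"

text \<open>Points of {0,1}^n are bool lists of length n; variable i (1 \<le> i \<le> n)
  is the list entry x ! (i - 1).  Go left on 0 (False), right on 1 (True).\<close>
fun eval_tree :: "dtree \<Rightarrow> bool list \<Rightarrow> bool" where
  "eval_tree (Leaf b) x = b"
| "eval_tree (Node i l r) x = (if x ! (i - 1) then eval_tree r x else eval_tree l x)"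

definition is_dtree :: "nat \<Rightarrow> dtree \<Rightarrow> bool" where
  "is_dtree n t \<longleftrightarrow> labels t \<subseteq> {1..n}"

definition cube :: "nat \<Rightarrow> bool list set" where
  "cube n = {x. length x = n}"

definition hamming :: "bool list \<Rightarrow> bool list \<Rightarrow> nat" where
  "hamming x z = card {i. i < length x \<and> x ! i \<noteq> z ! i}"

definition is_distribution :: "nat \<Rightarrow> (bool list \<Rightarrow> real) \<Rightarrow> bool" where
  "is_distribution n D \<longleftrightarrow> (\<forall>x\<in>cube n. D x \<ge> 0) \<and> (\<Sum>x\<in>cube n. D x) = 1"

text \<open>alpha-log-Lipschitz: log D is defined everywhere (D positive) and
  |log D(x) - log D(x')| \<le> log alpha for x, x' differing in exactly one bit.\<close>
definition log_lipschitz :: "real \<Rightarrow> nat \<Rightarrow> (bool list \<Rightarrow> real) \<Rightarrow> bool" where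
  "log_lipschitz \<alpha> n D \<longleftrightarrow> (\<forall>x\<in>cube n. D x > 0) \<and>
     (\<forall>x\<in>cube n. \<forall>x'\<in>cube n. hamming x x' = 1 \<longrightarrow> \<bar>ln (D x) - ln (D x')\<bar> \<le> ln \<alpha>)"

definition prob :: "nat \<Rightarrow> (bool list \<Rightarrow> real) \<Rightarrow> (bool list \<Rightarrow> bool) \<Rightarrow> real" where
  "prob n D P = (\<Sum>x\<in>{x\<in>cube n. P x}. D x)"

definition hball :: "nat \<Rightarrow> real \<Rightarrow> bool list \<Rightarrow> bool list set" where
  "hball n \<rho> x = {z\<in>cube n. real (hamming x z) \<le> \<rho>}"

definition robust_risk :: "nat \<Rightarrow> (bool list \<Rightarrow> real) \<Rightarrow> real \<Rightarrow> dtree \<Rightarrow> dtree \<Rightarrow> real" where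
  "robust_risk n D \<rho> c h = prob n D (\<lambda>x. \<exists>z\<in>hball n \<rho> x. eval_tree c z \<noteq> eval_tree h z)"

end

theory Submission
  imports Defs
begin

text \<open>
  Write \<open>P\<^sub>t(z)\<close> for the set of variables queried by the tree \<open>t\<close> on input \<open>z\<close>.
  Log-Lipschitzness means that at every node the two branches carry masses within a
  factor \<open>\<alpha>\<close> of each other, so each branch carries at most the fraction \<open>\<alpha>/(1+\<alpha>)\<close>
  of the mass; induction over the tree gives \<open>E[(1+1/\<alpha>)^|P\<^sub>t(z)|] \<le> nodes t\<close>.

  If \<open>y\<close> is within distance \<open>log n\<close> of an error point \<open>z\<close> (where \<open>c z \<noteq> h z\<close>), then
  replacing \<open>y\<close> by \<open>z\<close> on \<open>K = P\<^sub>c(z) \<union> P\<^sub>h(z)\<close> gives an error point \<open>z'\<close> from which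
  \<open>y\<close> is obtained by flipping a set \<open>T \<subseteq> K\<close> with \<open>2^|T| \<le> n\<close>, hence
  \<open>D y \<le> \<alpha>^|T| D z' \<le> poly(n) D z'\<close>.  Counting the admissible \<open>T\<close> with weight
  \<open>2^(-s|T|)\<close> bounds the robust risk by \<open>poly(n) E[1\<^sub>E W]\<close> with
  \<open>W = (1+2^(-s))^|K|\<close>, and AM-GM splits this into the error probability and
  \<open>E[W\<^sup>2]\<close>, which the tree bound controls once \<open>(1+2^(-s))^4 \<le> 1+1/\<alpha>\<close>.
\<close>

definition flip_bits :: "nat set \<Rightarrow> bool list \<Rightarrow> bool list" where
  "flip_bits T z = map (\<lambda>j. if j \<in> T then \<not> z ! j else z ! j) [0..<length z]"

lemma length_flip_bits [simp]: "length (flip_bits T z) = length z"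
  by (simp add: flip_bits_def)

lemma nth_flip_bits [simp]:
  "j < length z \<Longrightarrow> flip_bits T z ! j = (if j \<in> T then \<not> z ! j else z ! j)"
  by (simp add: flip_bits_def)

lemma flip_bits_empty [simp]: "flip_bits {} z = z"
  by (rule nth_equalityI) auto

lemma flip_bits_insert: "i \<notin> T \<Longrightarrow> flip_bits (insert i T) z = flip_bits {i} (flip_bits T z)"
  by (rule nth_equalityI) auto

lemma flip_bits_flip_bits [simp]: "flip_bits T (flip_bits T z) = z"
  by (rule nth_equalityI) auto

lemma flip_bits_in_cube [simp]: "flip_bits T z \<in> cube n \<longleftrightarrow> z \<in> cube n"
  by (simp add: cube_def)

lemma hamming_flip_bit: "i < length z \<Longrightarrow> hamming (flip_bits {i} z) z = 1"
proof -
  assume "i < length z"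
  then have "{j. j < length (flip_bits {i} z) \<and> flip_bits {i} z ! j \<noteq> z ! j} = {i}"
    by (auto split: if_splits)
  then show ?thesis by (simp add: hamming_def)
qed

lemma finite_cube [simp]: "finite (cube n)"
  using finite_lists_length_eq[of "UNIV :: bool set" n] by (simp add: cube_def)

lemma log_lipschitz_pos: "log_lipschitz \<alpha> n D \<Longrightarrow> z \<in> cube n \<Longrightarrow> D z > 0"
  unfolding log_lipschitz_def by blast

lemma log_lipschitz_flip_bit:
  assumes L: "log_lipschitz \<alpha> n D" and \<alpha>: "\<alpha> > 0" and z: "z \<in> cube n" and i: "i < n"
  shows "D (flip_bits {i} z) \<le> \<alpha> * D z"
proof -
  have pos: "D (flip_bits {i} z) > 0" "D z > 0"
    using log_lipschitz_pos[OF L] z by auto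
  have "hamming (flip_bits {i} z) z = 1"
    using hamming_flip_bit i z by (simp add: cube_def)
  then have "ln (D (flip_bits {i} z)) - ln (D z) \<le> ln \<alpha>"
    using L z unfolding log_lipschitz_def by fastforce
  then have "ln (D (flip_bits {i} z)) \<le> ln (\<alpha> * D z)"
    using pos \<alpha> by (simp add: ln_mult)
  then show ?thesis using pos \<alpha> by simp
qed

lemma log_lipschitz_flip_bits:
  assumes L: "log_lipschitz \<alpha> n D" and \<alpha>: "\<alpha> > 0" and T: "T \<subseteq> {..<n}" and z: "z \<in> cube n"
  shows "D (flip_bits T z) \<le> \<alpha> ^ card T * D z"
proof -
  have "finite T" using T finite_subset by blast
  then show ?thesis using T
  proof (induction T rule: finite_induct)
    case empty
    then show ?case by simp
  next
    case (insert i T)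
    have "D (flip_bits (insert i T) z) = D (flip_bits {i} (flip_bits T z))"
      by (simp only: flip_bits_insert[OF insert.hyps(2)])
    also have "\<dots> \<le> \<alpha> * D (flip_bits T z)"
      using insert.prems z by (intro log_lipschitz_flip_bit[OF L \<alpha>]) auto
    also have "\<dots> \<le> \<alpha> * (\<alpha> ^ card T * D z)"
      using insert \<alpha> by (intro mult_left_mono) auto
    finally show ?case using insert.hyps by simp
  qed
qed

lemma log_lipschitz_mass_fixed_bit:
  assumes L: "log_lipschitz \<alpha> n D" and \<alpha>: "\<alpha> > 0" and p: "p < n"
    and A: "A \<subseteq> cube n" and flip_closed: "\<And>z. z \<in> A \<Longrightarrow> flip_bits {p} z \<in> A"
  shows "(1 + 1/\<alpha>) * sum D {z\<in>A. z ! p = b} \<le> sum D A"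
proof -
  let ?B = "{z\<in>A. z ! p = b}" and ?N = "{z\<in>A. z ! p \<noteq> b}"
  have fin: "finite A" using finite_subset[OF A finite_cube] .
  have flip_p: "flip_bits {p} z ! p = (\<not> z ! p)" if "z \<in> A" for z
    using that A p by (auto simp: cube_def)
  have "sum D ?B = (\<Sum>z\<in>?N. D (flip_bits {p} z))"
    by (rule sum.reindex_bij_witness[where i="flip_bits {p}" and j="flip_bits {p}"])
      (simp_all add: flip_closed flip_p)
  also have "\<dots> \<le> (\<Sum>z\<in>?N. \<alpha> * D z)"
    using A p by (intro sum_mono log_lipschitz_flip_bit[OF L \<alpha>]) auto
  finally have "sum D ?B / \<alpha> \<le> sum D ?N"
    using \<alpha> by (simp add: sum_distrib_left[symmetric] divide_le_eq mult.commute)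
  moreover have "sum D A = sum D ?B + sum D ?N"
    using fin by (subst sum.union_disjoint[symmetric]) (auto intro: arg_cong[where f="sum D"])
  ultimately show ?thesis by (simp add: algebra_simps)
qed

definition subcube :: "nat \<Rightarrow> nat set \<Rightarrow> (nat \<Rightarrow> bool) \<Rightarrow> bool list set" where
  "subcube n V a = {z\<in>cube n. \<forall>j\<in>V. z ! j = a j}"

lemma subcube_subset_cube: "subcube n V a \<subseteq> cube n"
  by (auto simp: subcube_def)

lemma finite_subcube [simp]: "finite (subcube n V a)"
  using finite_subset[OF subcube_subset_cube finite_cube] .

lemma subcube_empty [simp]: "subcube n {} a = cube n"
  by (simp add: subcube_def)

lemma subcube_insert:
  "p \<notin> V \<Longrightarrow> subcube n (insert p V) (a(p := b)) = {z\<in>subcube n V a. z ! p = b}"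
  by (auto simp: subcube_def)

lemma flip_bit_in_subcube:
  assumes "p \<notin> V" "V \<subseteq> {..<n}" "z \<in> subcube n V a"
  shows "flip_bits {p} z \<in> subcube n V a"
proof -
  have "flip_bits {p} z ! j = z ! j" if "j \<in> V" for j
  proof -
    have "j < length z" using assms that by (auto simp: subcube_def cube_def)
    then show ?thesis using assms(1) that by auto
  qed
  then show ?thesis using assms(3) by (simp add: subcube_def)
qed

(* collects list positions i - 1, not the variable labels i *)
fun path_vars :: "dtree \<Rightarrow> bool list \<Rightarrow> nat set" where
  "path_vars (Leaf b) x = {}"
| "path_vars (Node i l r) x =
     insert (i - 1) (if x ! (i - 1) then path_vars r x else path_vars l x)"

lemma finite_path_vars [simp]: "finite (path_vars t x)"
  by (induction t) auto

lemma path_vars_subset: "is_dtree n t \<Longrightarrow> path_vars t x \<subseteq> {..<n}"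
  unfolding is_dtree_def by (induction t) auto

lemma agree_on_path_vars:
  "(\<And>j. j \<in> path_vars t z \<Longrightarrow> y ! j = z ! j) \<Longrightarrow>
    eval_tree t y = eval_tree t z \<and> path_vars t y = path_vars t z"
  by (induction t) auto

lemma path_weight_branch_le:
  assumes L: "log_lipschitz \<alpha> n D" and \<alpha>: "\<alpha> > 0"
    and p: "i - 1 < n" "i - 1 \<notin> V" and V: "V \<subseteq> {..<n}"
    and u: "u = (if b then r else l)"
    and IH: "(\<Sum>z\<in>subcube n (insert (i - 1) V) (a(i - 1 := b)).
               D z * (1 + 1/\<alpha>) ^ card (path_vars u z - insert (i - 1) V))
             \<le> real (nodes u) * sum D (subcube n (insert (i - 1) V) (a(i - 1 := b)))"
  shows "(\<Sum>z\<in>{z\<in>subcube n V a. z ! (i - 1) = b}.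
            D z * (1 + 1/\<alpha>) ^ card (path_vars (Node i l r) z - V))
         \<le> real (nodes u) * sum D (subcube n V a)"
proof -
  let ?\<Gamma> = "1 + 1/\<alpha>" and ?B = "{z\<in>subcube n V a. z ! (i - 1) = b}"
  have \<Gamma>: "?\<Gamma> \<ge> 1" using \<alpha> by simp
  have B: "?B = subcube n (insert (i - 1) V) (a(i - 1 := b))"
    using subcube_insert[OF p(2)] by simp
  have "(\<Sum>z\<in>?B. D z * ?\<Gamma> ^ card (path_vars (Node i l r) z - V))
      \<le> (\<Sum>z\<in>?B. ?\<Gamma> * (D z * ?\<Gamma> ^ card (path_vars u z - insert (i - 1) V)))"
  proof (rule sum_mono)
    fix z assume z: "z \<in> ?B"
    have "path_vars (Node i l r) z - V \<subseteq> insert (i - 1) (path_vars u z - insert (i - 1) V)"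
      using z u by auto
    then have "card (path_vars (Node i l r) z - V)
        \<le> card (insert (i - 1) (path_vars u z - insert (i - 1) V))"
      by (intro card_mono) auto
    also have "\<dots> \<le> Suc (card (path_vars u z - insert (i - 1) V))"
      by (simp add: card_insert_if)
    finally have "?\<Gamma> ^ card (path_vars (Node i l r) z - V)
        \<le> ?\<Gamma> ^ Suc (card (path_vars u z - insert (i - 1) V))"
      using \<Gamma> by (rule power_increasing)
    moreover have "D z \<ge> 0"
      using z by (auto simp: subcube_def intro: less_imp_le log_lipschitz_pos[OF L])
    ultimately show "D z * ?\<Gamma> ^ card (path_vars (Node i l r) z - V)
        \<le> ?\<Gamma> * (D z * ?\<Gamma> ^ card (path_vars u z - insert (i - 1) V))"
      by (metis mult.left_commute mult_left_mono power_Suc)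
  qed
  also have "\<dots> \<le> ?\<Gamma> * (real (nodes u) * sum D ?B)"
    using IH \<Gamma> unfolding B sum_distrib_left[symmetric] by (intro mult_left_mono) auto
  also have "\<dots> = real (nodes u) * (?\<Gamma> * sum D ?B)"
    by simp
  also have "\<dots> \<le> real (nodes u) * sum D (subcube n V a)"
    using log_lipschitz_mass_fixed_bit[OF L \<alpha> p(1) subcube_subset_cube]
      flip_bit_in_subcube[OF p(2) V]
    by (intro mult_left_mono) auto
  finally show ?thesis .
qed

lemma path_weight_subcube_le:
  assumes L: "log_lipschitz \<alpha> n D" and \<alpha>: "\<alpha> > 0"
  shows "is_dtree n t \<Longrightarrow> V \<subseteq> {..<n} \<Longrightarrow>
    (\<Sum>z\<in>subcube n V a. D z * (1 + 1/\<alpha>) ^ card (path_vars t z - V))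
      \<le> real (nodes t) * sum D (subcube n V a)"
proof (induction t arbitrary: V a)
  case (Leaf b)
  then show ?case by simp
next
  case (Node i l r)
  let ?p = "i - 1" and ?A = "subcube n V a"
  let ?w = "\<lambda>t z. D z * (1 + 1/\<alpha>) ^ card (path_vars t z - V)"
  have p: "?p < n" and subtrees: "is_dtree n l" "is_dtree n r"
    using Node.prems(1) by (auto simp: is_dtree_def)
  have mass_nonneg: "sum D ?A \<ge> 0"
    using log_lipschitz_pos[OF L] by (intro sum_nonneg) (auto simp: subcube_def less_imp_le)
  consider (queried) "?p \<in> V" | (fresh) "?p \<notin> V" by blast
  then show ?case
  proof cases
    case queried
    let ?u = "if a ?p then r else l"
    have "sum (?w (Node i l r)) ?A = sum (?w ?u) ?A"
      by (rule sum.cong) (use queried in \<open>auto simp: subcube_def insert_Diff_if\<close>)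
    also have "\<dots> \<le> real (nodes ?u) * sum D ?A"
      using Node.IH subtrees Node.prems(2) by (cases "a ?p") auto
    also have "\<dots> \<le> real (nodes (Node i l r)) * sum D ?A"
      using mass_nonneg by (intro mult_right_mono) auto
    finally show ?thesis .
  next
    case fresh
    have V': "insert ?p V \<subseteq> {..<n}" using p Node.prems(2) by auto
    have branch: "sum (?w (Node i l r)) {z\<in>?A. z ! ?p = b}
        \<le> real (nodes (if b then r else l)) * sum D ?A" for b
      by (rule path_weight_branch_le[OF L \<alpha> p fresh Node.prems(2) refl])
        (cases b; use Node.IH subtrees V' in auto)
    have "sum (?w (Node i l r)) ?A
        = sum (?w (Node i l r)) {z\<in>?A. z ! ?p = True}
          + sum (?w (Node i l r)) {z\<in>?A. z ! ?p = False}"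
      by (subst sum.union_disjoint[symmetric]) (auto intro: arg_cong[where f="sum _"])
    also have "\<dots> \<le> (real (nodes r) + real (nodes l)) * sum D ?A"
      using branch[of True] branch[of False] by (simp add: distrib_right)
    also have "\<dots> \<le> real (nodes (Node i l r)) * sum D ?A"
      using mass_nonneg by (intro mult_right_mono) auto
    finally show ?thesis .
  qed
qed

lemma path_weight_expectation_le:
  assumes "log_lipschitz \<alpha> n D" "\<alpha> > 0" "is_distribution n D" "is_dtree n t"
  shows "(\<Sum>z\<in>cube n. D z * (1 + 1/\<alpha>) ^ card (path_vars t z)) \<le> nodes t"
  using path_weight_subcube_le[OF assms(1,2,4), of "{}" undefined] assms(3)
  by (simp add: is_distribution_def)

lemma sum_power_card_Pow:
  fixes x :: "'a :: comm_semiring_1"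
  shows "finite K \<Longrightarrow> (\<Sum>T\<in>Pow K. x ^ card T) = (1 + x) ^ card K"
  using prod_add[of K "\<lambda>_. x" "\<lambda>_. 1"] by (simp add: add.commute)

lemma near_error_is_flip_of_error:
  assumes c: "is_dtree n c" and h: "is_dtree n h" and y: "y \<in> cube n"
    and z: "z \<in> hball n \<rho> y" and err: "eval_tree c z \<noteq> eval_tree h z"
  obtains z' T where "z' \<in> cube n" "eval_tree c z' \<noteq> eval_tree h z'"
    "T \<subseteq> path_vars c z' \<union> path_vars h z'" "real (card T) \<le> \<rho>" "y = flip_bits T z'"
proof -
  let ?K = "path_vars c z \<union> path_vars h z"
  have K: "?K \<subseteq> {..<n}" using path_vars_subset[OF c] path_vars_subset[OF h] by blast
  have len: "length y = n" "length z = n" using y z by (auto simp: cube_def hball_def)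
  define z' where "z' = map (\<lambda>j. if j \<in> ?K then z ! j else y ! j) [0..<n]"
  have z'_nth: "z' ! j = (if j \<in> ?K then z ! j else y ! j)" if "j < n" for j
    using that by (simp add: z'_def)
  have agree: "z' ! j = z ! j" if "j \<in> ?K" for j
    using that K z'_nth by auto
  have same_c: "eval_tree c z' = eval_tree c z \<and> path_vars c z' = path_vars c z"
    by (rule agree_on_path_vars) (simp add: agree)
  have same_h: "eval_tree h z' = eval_tree h z \<and> path_vars h z' = path_vars h z"
    by (rule agree_on_path_vars) (simp add: agree)
  define T where "T = {j\<in>?K. y ! j \<noteq> z ! j}"
  have "card T \<le> hamming y z"
    unfolding hamming_def T_def using K len by (intro card_mono) auto
  then have "real (card T) \<le> \<rho>" using z by (auto simp: hball_def)
  moreover have "y = flip_bits T z'"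
  proof (rule nth_equalityI)
    have "length z' = n" by (simp add: z'_def)
    then show "length y = length (flip_bits T z')" using len by simp
    fix j assume "j < length y"
    then show "y ! j = flip_bits T z' ! j"
      using len \<open>length z' = n\<close> z'_nth[of j] by (auto simp: T_def)
  qed
  moreover have "z' \<in> cube n" by (simp add: z'_def cube_def)
  moreover have "T \<subseteq> path_vars c z' \<union> path_vars h z'"
    using same_c same_h by (auto simp: T_def)
  ultimately show thesis
    using that same_c same_h err by metis
qed

lemma mass_of_short_flips_le:
  assumes L: "log_lipschitz \<alpha> n D" and \<alpha>: "0 < \<alpha>" "\<alpha> \<le> 2 ^ s"
    and z: "z \<in> cube n" and K: "K \<subseteq> {..<n}"
  shows "(\<Sum>T | T \<subseteq> K \<and> 2 ^ card T \<le> real n. D (flip_bits T z))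
    \<le> real n ^ (2 * s) * (1 + 1 / 2 ^ s) ^ card K * D z"
proof -
  let ?x = "1 / 2 ^ s :: real" and ?N = "real n ^ (2 * s)"
  have Dz: "D z > 0" using log_lipschitz_pos[OF L z] .
  have each: "D (flip_bits T z) \<le> ?N * D z * ?x ^ card T"
    if T: "T \<subseteq> K" "2 ^ card T \<le> real n" for T
  proof -
    define q :: real where "q = (2 ^ card T) ^ s"
    have q: "1 \<le> q" "q \<le> real n ^ s"
      using T by (auto simp: q_def intro: power_mono)
    have "D (flip_bits T z) \<le> \<alpha> ^ card T * D z"
      using log_lipschitz_flip_bits[OF L \<alpha>(1) _ z] T K by blast
    also have "\<dots> \<le> (2 ^ s) ^ card T * D z"
      using \<alpha> Dz by (intro mult_right_mono power_mono) auto
    also have "\<dots> = q * D z"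
      by (simp add: q_def power_mult[symmetric] mult.commute)
    also have "\<dots> = q\<^sup>2 * D z * ?x ^ card T"
      using q
      by (simp add: q_def power2_eq_square power_one_over power_mult[symmetric] mult.commute)
    also have "\<dots> \<le> (real n ^ s)\<^sup>2 * D z * ?x ^ card T"
      using q Dz by (intro mult_right_mono power_mono) auto
    finally show ?thesis by (simp add: power_mult[symmetric] mult.commute)
  qed
  have "(\<Sum>T | T \<subseteq> K \<and> 2 ^ card T \<le> real n. D (flip_bits T z))
      \<le> (\<Sum>T | T \<subseteq> K \<and> 2 ^ card T \<le> real n. ?N * D z * ?x ^ card T)"
    using each by (intro sum_mono) auto
  also have "\<dots> \<le> (\<Sum>T\<in>Pow K. ?N * D z * ?x ^ card T)"
    using K Dz by (intro sum_mono2) (auto intro: finite_subset)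
  also have "\<dots> = ?N * D z * (1 + ?x) ^ card K"
    using K by (simp add: sum_distrib_left[symmetric] sum_power_card_Pow finite_subset)
  finally show ?thesis by (simp add: mult_ac)
qed

lemma robust_risk_le_weighted_error:
  assumes L: "log_lipschitz \<alpha> n D" and \<alpha>: "0 < \<alpha>" "\<alpha> \<le> 2 ^ s" and n: "n \<ge> 1"
    and c: "is_dtree n c" and h: "is_dtree n h"
  shows "robust_risk n D (log 2 (real n)) c h
    \<le> real n ^ (2 * s) * (\<Sum>z | z \<in> cube n \<and> eval_tree c z \<noteq> eval_tree h z.
        D z * (1 + 1 / 2 ^ s) ^ card (path_vars c z \<union> path_vars h z))"
proof -
  let ?K = "\<lambda>z. path_vars c z \<union> path_vars h z" and ?flip = "\<lambda>(z, T). flip_bits T z"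
  define E where "E = {z \<in> cube n. eval_tree c z \<noteq> eval_tree h z}"
  define Q where "Q z = {T. T \<subseteq> ?K z \<and> 2 ^ card T \<le> real n}" for z
  define R where
    "R = {y \<in> cube n. \<exists>z\<in>hball n (log 2 (real n)) y. eval_tree c z \<noteq> eval_tree h z}"
  have K: "?K z \<subseteq> {..<n}" for z
    using path_vars_subset[OF c] path_vars_subset[OF h] by blast
  have nonneg: "D y \<ge> 0" if "y \<in> cube n" for y
    using log_lipschitz_pos[OF L that] by simp
  have fin_E: "finite E" and fin_Q: "finite (Q z)" for z
    by (auto simp: E_def Q_def intro: finite_subset[of _ "Pow (?K z)"])
  then have fin: "finite (Sigma E Q)" by blast
  have "R \<subseteq> ?flip ` Sigma E Q"
  proof
    fix y assume "y \<in> R"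
    then obtain z where y: "y \<in> cube n"
      and z: "z \<in> hball n (log 2 (real n)) y" "eval_tree c z \<noteq> eval_tree h z"
      by (auto simp: R_def)
    obtain z' T where z': "z' \<in> cube n" "eval_tree c z' \<noteq> eval_tree h z'"
      and T: "T \<subseteq> ?K z'" "real (card T) \<le> log 2 (real n)" and yT: "y = flip_bits T z'"
      using near_error_is_flip_of_error[OF c h y z] .
    have "2 powr real (card T) \<le> real n"
      using T(2) n by (subst le_log_iff[symmetric]) auto
    then have "(z', T) \<in> Sigma E Q"
      using z' T by (simp add: E_def Q_def powr_realpow)
    then show "y \<in> ?flip ` Sigma E Q"
      using yT by force
  qed
  then have "sum D R \<le> sum D (?flip ` Sigma E Q)"
    using fin nonneg by (intro sum_mono2) (auto simp: E_def)
  also have "\<dots> \<le> (\<Sum>(z, T)\<in>Sigma E Q. D (flip_bits T z))"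
    using sum_image_le[OF fin, of D ?flip] nonneg by (force simp: E_def comp_def case_prod_beta)
  also have "\<dots> = (\<Sum>z\<in>E. \<Sum>T\<in>Q z. D (flip_bits T z))"
    using fin_E fin_Q by (simp add: sum.Sigma)
  also have "\<dots> \<le> (\<Sum>z\<in>E. real n ^ (2 * s) * (1 + 1 / 2 ^ s) ^ card (?K z) * D z)"
    unfolding Q_def using mass_of_short_flips_le[OF L \<alpha>] K by (intro sum_mono) (auto simp: E_def)
  finally show ?thesis
    by (simp add: robust_risk_def prob_def R_def E_def sum_distrib_left mult_ac)
qed

lemma sum_weighted_le_mass_plus_second_moment:
  fixes D W :: "'a \<Rightarrow> real"
  assumes A: "finite A" "E \<subseteq> A" and D: "\<And>z. z \<in> A \<Longrightarrow> D z \<ge> 0" and t: "t > 0"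
  shows "(\<Sum>z\<in>E. D z * W z) \<le> t * sum D E + (\<Sum>z\<in>A. D z * (W z)\<^sup>2) / t"
proof -
  have "(\<Sum>z\<in>E. D z * W z) \<le> (\<Sum>z\<in>E. t * D z + D z * (W z)\<^sup>2 / t)"
  proof (rule sum_mono)
    fix z assume "z \<in> E"
    have "t * W z \<le> t\<^sup>2 + (W z)\<^sup>2"
      using sum_squares_bound[of t "W z"] zero_le_power2[of t] zero_le_power2[of "W z"] by linarith
    then have "W z \<le> t + (W z)\<^sup>2 / t"
      using t by (simp add: field_simps power2_eq_square)
    then show "D z * W z \<le> t * D z + D z * (W z)\<^sup>2 / t"
      using D \<open>z \<in> E\<close> A(2) mult_left_mono[of "W z" _ "D z"] by (force simp: algebra_simps)
  qed
  also have "\<dots> = t * sum D E + (\<Sum>z\<in>E. D z * (W z)\<^sup>2) / t"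
    by (simp add: sum.distrib sum_distrib_left sum_divide_distrib)
  also have "\<dots> \<le> t * sum D E + (\<Sum>z\<in>A. D z * (W z)\<^sup>2) / t"
    using A D t by (intro add_left_mono divide_right_mono sum_mono2) auto
  finally show ?thesis .
qed

lemma path_weight_second_moment_le:
  assumes L: "log_lipschitz \<alpha> n D" and \<alpha>: "\<alpha> > 0" and dist: "is_distribution n D"
    and c: "is_dtree n c" and h: "is_dtree n h" and x: "0 \<le> x" "(1 + x) ^ 4 \<le> 1 + 1/\<alpha>"
  shows "(\<Sum>z\<in>cube n. D z * ((1 + x) ^ card (path_vars c z \<union> path_vars h z))\<^sup>2)
    \<le> (nodes c + nodes h) / 2"
proof -
  let ?\<Gamma> = "1 + 1/\<alpha>"
  have "D z * ((1 + x) ^ card (path_vars c z \<union> path_vars h z))\<^sup>2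
      \<le> D z * ((?\<Gamma> ^ card (path_vars c z) + ?\<Gamma> ^ card (path_vars h z)) / 2)"
    if z: "z \<in> cube n" for z
  proof -
    define u where "u = (1 + x) ^ (2 * card (path_vars c z))"
    define v where "v = (1 + x) ^ (2 * card (path_vars h z))"
    have u: "u\<^sup>2 \<le> ?\<Gamma> ^ card (path_vars c z)" and v: "v\<^sup>2 \<le> ?\<Gamma> ^ card (path_vars h z)"
      unfolding u_def v_def power_mult[symmetric]
      using x by (simp_all add: power_mult mult.commute[of 2] power_mono)
    have "((1 + x) ^ card (path_vars c z \<union> path_vars h z))\<^sup>2
        = (1 + x) ^ (2 * card (path_vars c z \<union> path_vars h z))"
      by (simp add: power_mult[symmetric] mult.commute)
    also have "\<dots> \<le> (1 + x) ^ (2 * card (path_vars c z) + 2 * card (path_vars h z))"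
      using x card_Un_le[of "path_vars c z" "path_vars h z"] by (intro power_increasing) auto
    also have "\<dots> = u * v"
      by (simp add: u_def v_def power_add)
    also have "\<dots> \<le> (u\<^sup>2 + v\<^sup>2) / 2"
      using sum_squares_bound[of u v] by simp
    also have "\<dots> \<le> (?\<Gamma> ^ card (path_vars c z) + ?\<Gamma> ^ card (path_vars h z)) / 2"
      using u v by simp
    finally show ?thesis
      using log_lipschitz_pos[OF L z] by (intro mult_left_mono) auto
  qed
  then have "(\<Sum>z\<in>cube n. D z * ((1 + x) ^ card (path_vars c z \<union> path_vars h z))\<^sup>2)
      \<le> (\<Sum>z\<in>cube n. D z * ((?\<Gamma> ^ card (path_vars c z) + ?\<Gamma> ^ card (path_vars h z)) / 2))"
    by (rule sum_mono)
  also have "\<dots> = ((\<Sum>z\<in>cube n. D z * ?\<Gamma> ^ card (path_vars c z))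
         + (\<Sum>z\<in>cube n. D z * ?\<Gamma> ^ card (path_vars h z))) / 2"
    by (simp add: sum.distrib sum_divide_distrib[symmetric] distrib_left)
  also have "\<dots> \<le> (nodes c + nodes h) / 2"
    using path_weight_expectation_le[OF L \<alpha> dist c] path_weight_expectation_le[OF L \<alpha> dist h]
    by simp
  finally show ?thesis .
qed

lemma one_plus_pow4_le:
  fixes x :: real
  assumes "0 \<le> x" "x \<le> 1"
  shows "(1 + x) ^ 4 \<le> 1 + 15 * x"
proof -
  have "x ^ 2 \<le> x" "x ^ 3 \<le> x" "x ^ 4 \<le> x"
    using assms by (simp_all add: power_le_one power_decreasing[of 1 _ x, simplified])
  moreover have "(1 + x) ^ 4 = 1 + 4 * x + 6 * x ^ 2 + 4 * x ^ 3 + x ^ 4"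
    by algebra
  ultimately show ?thesis by linarith
qed

lemma robust_risk_lt_of_small_error:
  assumes \<alpha>: "1 \<le> \<alpha>" "15 * \<alpha> \<le> 2 ^ s" and n: "n \<ge> 1"
    and c: "is_dtree n c" and h: "is_dtree n h" and m: "nodes c + nodes h \<le> m"
    and dist: "is_distribution n D" and L: "log_lipschitz \<alpha> n D" and \<epsilon>: "0 < \<epsilon>"
    and small: "prob n D (\<lambda>x. eval_tree h x \<noteq> eval_tree c x)
                  < \<epsilon>\<^sup>2 / (4 * real m * real n ^ (4 * s))"
  shows "robust_risk n D (log 2 (real n)) c h < \<epsilon>"
proof -
  define x :: real where "x = 1 / 2 ^ s"
  define N where "N = real n ^ (2 * s)"
  define W where "W z = (1 + x) ^ card (path_vars c z \<union> path_vars h z)" for z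
  define E where "E = {z \<in> cube n. eval_tree c z \<noteq> eval_tree h z}"
  define t where "t = 2 * N * real m / \<epsilon>"
  have m1: "real m \<ge> 1" using m by (cases c) auto
  have N: "N \<ge> 1" using n by (simp add: N_def)
  have t: "t > 0" using m1 N \<epsilon> by (simp add: t_def)
  have x: "0 \<le> x" "x \<le> 1" using \<alpha> by (auto simp: x_def)
  have "15 * x \<le> 1 / \<alpha>"
    using \<alpha> by (simp add: x_def field_simps)
  then have x4: "(1 + x) ^ 4 \<le> 1 + 1 / \<alpha>"
    using one_plus_pow4_le[OF x] by linarith
  have error: "sum D E < \<epsilon>\<^sup>2 / (4 * real m * N\<^sup>2)"
    using small by (simp add: prob_def E_def N_def power_mult[symmetric] eq_commute)
  have "robust_risk n D (log 2 (real n)) c h \<le> N * (\<Sum>z\<in>E. D z * W z)"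
    using robust_risk_le_weighted_error[OF L _ _ n c h, of s] \<alpha>
    by (simp add: N_def W_def E_def x_def)
  also have "\<dots> \<le> N * (t * sum D E + (\<Sum>z\<in>cube n. D z * (W z)\<^sup>2) / t)"
    using N t log_lipschitz_pos[OF L]
    by (intro mult_left_mono sum_weighted_le_mass_plus_second_moment)
      (auto simp: E_def less_imp_le)
  also have "\<dots> \<le> N * (t * sum D E + real m / t)"
    using path_weight_second_moment_le[OF L _ dist c h x(1) x4] \<alpha> m N t
    by (intro mult_left_mono add_left_mono divide_right_mono) (auto simp: W_def)
  also have "\<dots> = 2 * N\<^sup>2 * real m * sum D E / \<epsilon> + \<epsilon> / 2"
    using m1 N \<epsilon> by (simp add: t_def field_simps power2_eq_square)
  also have "\<dots> < \<epsilon>"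
    using error m1 N \<epsilon> by (simp add: field_simps power2_eq_square)
  finally show ?thesis .
qed

theorem theorem5p8:
  fixes \<alpha> :: real
  assumes "\<alpha> \<ge> 1"
  shows "\<exists>C::real. \<exists>a b d :: nat. C > 0 \<and>
    (\<forall>(n::nat) (m::nat) (c::dtree) (h::dtree) (D::bool list \<Rightarrow> real) (\<epsilon>::real).
       is_dtree n c \<longrightarrow> is_dtree n h \<longrightarrow> nodes c + nodes h \<le> m \<longrightarrow>
       is_distribution n D \<longrightarrow> log_lipschitz \<alpha> n D \<longrightarrow>
       0 < \<epsilon> \<longrightarrow> \<epsilon> < 1/2 \<longrightarrow>
       prob n D (\<lambda>x. eval_tree h x \<noteq> eval_tree c x)
          < C * (1 / real m) ^ a * (1 / real n) ^ b * \<epsilon> ^ d \<longrightarrow>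
       robust_risk n D (log 2 (real n)) c h < \<epsilon>)"
proof -
  obtain s :: nat where s: "15 * \<alpha> \<le> 2 ^ s"
    using real_arch_pow[of 2 "15 * \<alpha>"] by (auto intro: less_imp_le)
  then have "s \<noteq> 0" using assms by (intro notI) simp
  have "robust_risk n D (log 2 (real n)) c h < \<epsilon>"
    if "is_dtree n c" "is_dtree n h" "nodes c + nodes h \<le> m" "is_distribution n D"
      "log_lipschitz \<alpha> n D" "0 < \<epsilon>"
      and small: "prob n D (\<lambda>x. eval_tree h x \<noteq> eval_tree c x)
        < 1/4 * (1 / real m) ^ 1 * (1 / real n) ^ (4 * s) * \<epsilon> ^ 2"
    for n m c h D \<epsilon>
  proof (rule robust_risk_lt_of_small_error[OF assms s _ that(1-6)])
    have "prob n D (\<lambda>x. eval_tree h x \<noteq> eval_tree c x) \<ge> 0"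
      using log_lipschitz_pos[OF that(5)] by (auto simp: prob_def intro: sum_nonneg less_imp_le)
    \<comment> \<open>for \<open>n = 0\<close> the right-hand side is \<open>0\<close> because \<open>1 / 0 = 0\<close>\<close>
    then show "n \<ge> 1"
      using small \<open>s \<noteq> 0\<close> by (cases n) (auto simp: power_0_left)
    show "prob n D (\<lambda>x. eval_tree h x \<noteq> eval_tree c x)
      < \<epsilon>\<^sup>2 / (4 * real m * real n ^ (4 * s))"
      using small by (simp add: power_one_over field_simps)
  qed
  then show ?thesis
    by (intro exI[of _ "1/4"] exI[of _ 1] exI[of _ "4 * s"] exI[of _ 2]) auto
qed

end
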